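(* Let $A\xrightarrow{\phi}B\to C\to D$ be an exact sequence of finitely generated $\mathbb Z$-modules, and let $Q$ be the cokernel of the map $\phi_{\mathrm{free}}:A_{\mathrm{free}}\to B_{\mathrm{free}}$ induced by $\phi$. Then \[ |C_{\mathrm{tors}}|\le |Q_{\mathrm{tors}}|\cdot|B_{\mathrm{tors}}|\cdot|D_{\mathrm{tors}}|. \]
   Context: For a finitely generated $\mathbb Z$-module $M$, $M_{\mathrm{tors}}$ is its torsion submodule and $M_{\mathrm{free}}=M/M_{\mathrm{tors}}$. *)

theory Defs
  imports "HOL-Algebra.Algebra"
begin

text \<open>Finitely generated Z-modules are modelled as finitely generated commutative
  groups (HOL-Algebra, multiplicative notation).\<close>

definition fin_gen :: "('a, 'm) monoid_scheme \<Rightarrow> bool" where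
  "fin_gen G \<longleftrightarrow> (\<exists>S. finite S \<and> S \<subseteq> carrier G \<and> generate G S = carrier G)"

definition tors :: "('a, 'm) monoid_scheme \<Rightarrow> 'a set" where
  "tors G = {x \<in> carrier G. \<exists>n::nat. n > 0 \<and> x [^]\<^bsub>G\<^esub> n = \<one>\<^bsub>G\<^esub>}"

definition free_part :: "('a, 'm) monoid_scheme \<Rightarrow> ('a set) monoid" where
  "free_part G = G Mod (tors G)"

text \<open>The map induced on free parts by f: the coset X is sent to the coset of f x
  for x in X (well defined since homomorphisms preserve torsion).\<close>
definition free_map :: "('a, 'm) monoid_scheme \<Rightarrow> ('b, 'n) monoid_scheme \<Rightarrow> ('a \<Rightarrow> 'b) \<Rightarrow> 'a set \<Rightarrow> 'b set" where
  "free_map G H f Y = \<Union> ((\<lambda>y. r_coset H (tors H) (f y)) ` Y)"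

definition coker :: "('a, 'm) monoid_scheme \<Rightarrow> ('b, 'n) monoid_scheme \<Rightarrow> ('a \<Rightarrow> 'b) \<Rightarrow> ('b set) monoid" where
  "coker G H f = H Mod (f ` carrier G)"

end

theory Submission
  imports Defs
begin

text \<open>The torsion of C is counted in two layers. As \<open>im \<psi> = ker \<chi>\<close>, the map \<open>\<chi>\<close>
  sends \<open>C_tors\<close> into \<open>D_tors\<close> with fibres that are cosets of \<open>C_tors \<inter> im \<psi>\<close>. If
  \<open>c = \<psi> b\<close> is torsion then some power \<open>b\<^sup>n\<close> lies in \<open>ker \<psi> = im \<phi>\<close>, so the class of \<open>b\<close> in
  \<open>Q = B_free / \<phi>_free(A_free)\<close> is torsion; two lifts with the same class differ by an
  element of \<open>B_tors \<cdot> im \<phi>\<close>, so their images differ by an element of \<open>\<psi>(B_tors)\<close>.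
  Both steps are instances of one counting principle: if the fibres of \<open>f\<close> on a set \<open>X\<close>
  of group elements lie in translates of \<open>K\<close>, then \<open>|X| \<le> |K| \<cdot> |f(X)|\<close>.

  The torsion groups involved are finite because the groups are finitely generated:
  adjoining a generator \<open>g\<close> to a subgroup \<open>H\<close> adds only the finitely many cosets \<open>H g\<^sup>k\<close>
  of finite order in \<open>G/H\<close>.\<close>

lemma (in group) card_le_by_fibres:
  assumes S: "S \<subseteq> carrier G" and K: "finite K" and fS: "finite (f ` S)"
    and fibre: "\<And>x x'. x \<in> S \<Longrightarrow> x' \<in> S \<Longrightarrow> f x = f x' \<Longrightarrow> x' \<otimes> inv x \<in> K"
  shows "finite S" and "card S \<le> card K * card (f ` S)"
proof -
  let ?rep = "inv_into S f"
  have cover: "S \<subseteq> (\<Union>y\<in>f ` S. (\<lambda>z. z \<otimes> ?rep y) ` K)"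
  proof
    fix x assume x: "x \<in> S"
    define r where "r = ?rep (f x)"
    have r: "r \<in> S" "f r = f x"
      unfolding r_def using x by (auto intro: inv_into_into f_inv_into_f)
    have "x = (x \<otimes> inv r) \<otimes> r"
      using x r(1) S by (simp add: m_assoc subsetD)
    moreover have "x \<otimes> inv r \<in> K" using fibre[OF r(1) x r(2)] .
    ultimately show "x \<in> (\<Union>y\<in>f ` S. (\<lambda>z. z \<otimes> ?rep y) ` K)"
      using x unfolding r_def by blast
  qed
  have finite_cover: "finite (\<Union>y\<in>f ` S. (\<lambda>z. z \<otimes> ?rep y) ` K)"
    by (intro finite_UN_I fS finite_imageI K)
  then show "finite S" by (rule finite_subset[OF cover])
  have "card S \<le> card (\<Union>y\<in>f ` S. (\<lambda>z. z \<otimes> ?rep y) ` K)"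
    by (rule card_mono[OF finite_cover cover])
  also have "\<dots> \<le> (\<Sum>y\<in>f ` S. card ((\<lambda>z. z \<otimes> ?rep y) ` K))"
    by (rule card_UN_le[OF fS])
  also have "\<dots> \<le> (\<Sum>y\<in>f ` S. card K)"
    by (intro sum_mono card_image_le K)
  finally show "card S \<le> card K * card (f ` S)" by (simp add: mult.commute)
qed

lemma tors_subset_carrier: "tors G \<subseteq> carrier G"
  unfolding tors_def by auto

lemma (in comm_group) subgroup_tors: "subgroup (tors G) G"
proof (rule subgroupI)
  show "tors G \<subseteq> carrier G" by (rule tors_subset_carrier)
  show "tors G \<noteq> {}"
    unfolding tors_def by (auto intro!: exI[of _ "1::nat"])
next
  fix a assume "a \<in> tors G"
  then show "inv a \<in> tors G" unfolding tors_def by (auto simp: nat_pow_inv)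
next
  fix a b assume "a \<in> tors G" "b \<in> tors G"
  then obtain n m :: nat where a: "a \<in> carrier G" "n > 0" "a [^] n = \<one>"
    and b: "b \<in> carrier G" "m > 0" "b [^] m = \<one>"
    unfolding tors_def by auto
  have "(a \<otimes> b) [^] (n * m) = (a [^] n) [^] m \<otimes> (b [^] m) [^] n"
    using a b by (metis nat_pow_distrib nat_pow_pow mult.commute)
  also have "\<dots> = \<one>" using a b by simp
  finally have "(a \<otimes> b) [^] (n * m) = \<one>" .
  then show "a \<otimes> b \<in> tors G"
    using a b unfolding tors_def by (auto intro!: exI[of _ "n * m"])
qed

lemma hom_tors:
  assumes "group G" "group H" "f \<in> hom G H"
  shows "f ` tors G \<subseteq> tors H"
proof -
  interpret group_hom G H f
    using assms by (simp add: group_hom_def group_hom_axioms_def)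
  show ?thesis
    unfolding tors_def by (auto simp flip: hom_nat_pow)
qed

lemma (in group) finite_rcosets_of_torsion_powers:
  assumes H: "subgroup H G" and g: "g \<in> carrier G"
  shows "finite {H #> g [^] k | k::int. \<exists>n::nat. n > 0 \<and> g [^] (k * int n) \<in> H}"
    (is "finite ?R")
proof (cases "\<exists>m::nat. m > 0 \<and> g [^] m \<in> H")
  case True
  then obtain m :: nat where m: "m > 0" "g [^] m \<in> H" by blast
  have "?R \<subseteq> (\<lambda>r. H #> g [^] r) ` {0..<int m}"
  proof clarify
    fix k :: int
    have "(g [^] int m) [^] (k div int m) \<in> H"
      using m(2) by (simp add: int_pow_int subgroup_int_pow_closed[OF H])
    moreover have "g [^] k = (g [^] int m) [^] (k div int m) \<otimes> g [^] (k mod int m)"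
    proof -
      have "g [^] k = g [^] (int m * (k div int m) + k mod int m)" by simp
      also have "\<dots> = (g [^] int m) [^] (k div int m) \<otimes> g [^] (k mod int m)"
        by (simp only: int_pow_mult[OF g] int_pow_pow[OF g])
      finally show ?thesis .
    qed
    ultimately have "g [^] k \<in> H #> g [^] (k mod int m)"
      using H g by (simp add: rcosI subgroup.subset)
    then have "H #> g [^] k = H #> g [^] (k mod int m)"
      using H g by (simp add: repr_independence)
    moreover have "k mod int m \<in> {0..<int m}" using m(1) by simp
    ultimately show "H #> g [^] k \<in> (\<lambda>r. H #> g [^] r) ` {0..<int m}" by blast
  qed
  then show ?thesis by (rule finite_subset) simp
next
  case False
  have "?R \<subseteq> {H #> g [^] (0::int)}"
  proof clarify
    fix k :: int and n :: nat
    assume n: "n > 0" and kn: "g [^] (k * int n) \<in> H"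
    have "g [^] nat \<bar>k * int n\<bar> \<in> H"
    proof (cases "k * int n \<ge> 0")
      case True
      then show ?thesis using kn by (simp add: pow_nat)
    next
      case False
      then have "g [^] nat \<bar>k * int n\<bar> = g [^] (- (k * int n))"
        by (simp add: pow_nat)
      also have "\<dots> = inv (g [^] (k * int n))"
        using g by (rule int_pow_neg)
      finally have "g [^] nat \<bar>k * int n\<bar> = inv (g [^] (k * int n))" .
      then show ?thesis using kn H by (simp add: subgroup.m_inv_closed)
    qed
    then have "nat \<bar>k * int n\<bar> = 0" using False gr0I by metis
    then have "k = 0" using n by simp
    then show "H #> g [^] k = H #> g [^] (0::int)" by simp
  qed
  then show ?thesis by (rule finite_subset) simp
qed

lemma (in comm_group) generate_insert_subset:
  assumes g: "g \<in> carrier G" and S: "S \<subseteq> carrier G"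
  shows "generate G (insert g S) \<subseteq> {g [^] (k::int) \<otimes> y | k y. y \<in> generate G S}"
    (is "_ \<subseteq> ?R")
proof (rule generate_subgroup_incl)
  have H: "subgroup (generate G S) G" by (rule generate_is_subgroup[OF S])
  have Hc: "generate G S \<subseteq> carrier G" using H subgroup.subset by blast
  show "insert g S \<subseteq> ?R"
  proof
    fix x assume "x \<in> insert g S"
    then show "x \<in> ?R"
    proof
      assume "x = g" then show ?thesis using g subgroup.one_closed[OF H]
        by (auto intro!: exI[of _ "1::int"] exI[of _ "\<one>"])
    next
      assume "x \<in> S" then show ?thesis using S generate.incl[of x S G]
        by (auto intro!: exI[of _ "0::int"] exI[of _ x])
    qed
  qed
  show "subgroup ?R G"
  proof (rule subgroupI)
    show "?R \<subseteq> carrier G" using Hc g by auto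
    show "?R \<noteq> {}" using subgroup.one_closed[OF H] by blast
  next
    fix a assume "a \<in> ?R"
    then obtain k y where a: "a = g [^] (k::int) \<otimes> y" "y \<in> generate G S" by auto
    then have "inv a = g [^] (-k) \<otimes> inv y" using g Hc by (auto simp: inv_mult int_pow_neg)
    then show "inv a \<in> ?R" using a subgroup.m_inv_closed[OF H] by blast
  next
    fix a b assume "a \<in> ?R" "b \<in> ?R"
    then obtain k y l z where a: "a = g [^] (k::int) \<otimes> y" "y \<in> generate G S"
      and b: "b = g [^] (l::int) \<otimes> z" "z \<in> generate G S" by blast
    have "a \<otimes> b = g [^] (k + l) \<otimes> (y \<otimes> z)"
      using a b g Hc by (auto simp: int_pow_mult m_ac subsetD)
    then show "a \<otimes> b \<in> ?R" using subgroup.m_closed[OF H a(2) b(2)] by blast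
  qed
qed

lemma (in comm_group) rcos_torsion_mult_power:
  assumes H: "subgroup H G" and g: "g \<in> carrier G" and x: "x \<in> tors G"
    and xky: "x = g [^] (k::int) \<otimes> y" and y: "y \<in> H"
  shows "H #> x = H #> g [^] k" and "\<exists>n::nat. n > 0 \<and> g [^] (k * int n) \<in> H"
proof -
  have yc: "y \<in> carrier G" using subgroup.mem_carrier[OF H y] .
  have "x = y \<otimes> g [^] k" using g yc by (simp add: xky m_comm)
  then have "x \<in> H #> g [^] k" using y H g by (simp add: rcosI subgroup.subset)
  then show "H #> x = H #> g [^] k" using H g by (simp add: repr_independence)
  from x obtain n :: nat where n: "n > 0" "x [^] n = \<one>" unfolding tors_def by blast
  have "g [^] (k * int n) \<otimes> y [^] int n = (g [^] k \<otimes> y) [^] int n"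
    using g yc by (simp add: int_pow_distrib int_pow_pow)
  also have "\<dots> = \<one>" using n(2) by (simp add: xky int_pow_int)
  finally have "g [^] (k * int n) = inv (y [^] int n)"
    using g yc by (simp add: inv_equality)
  then have "g [^] (k * int n) \<in> H"
    using y H by (simp add: subgroup.m_inv_closed subgroup_int_pow_closed)
  then show "\<exists>n::nat. n > 0 \<and> g [^] (k * int n) \<in> H" using n(1) by blast
qed

lemma (in comm_group) finite_tors_inter_generate:
  assumes "finite S" "S \<subseteq> carrier G"
  shows "finite (tors G \<inter> generate G S)"
  using assms
proof (induction S rule: finite_induct)
  case empty
  then show ?case by (simp add: generate_empty)
next
  case (insert g S)
  define H where "H = generate G S"
  have g: "g \<in> carrier G" and S: "S \<subseteq> carrier G"
    using insert.prems by auto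
  have H: "subgroup H G"
    unfolding H_def by (rule generate_is_subgroup[OF S])
  have finite_tors_H: "finite (tors G \<inter> H)"
    using insert.IH[OF S] unfolding H_def .
  let ?R = "{H #> g [^] k | k::int. \<exists>n::nat. n > 0 \<and> g [^] (k * int n) \<in> H}"
  have cosets: "(\<lambda>x. H #> x) ` (tors G \<inter> generate G (insert g S)) \<subseteq> ?R"
  proof clarify
    fix x assume x: "x \<in> tors G" "x \<in> generate G (insert g S)"
    have "x \<in> {g [^] (k::int) \<otimes> y | k y. y \<in> H}"
      using generate_insert_subset[OF g S] x(2) unfolding H_def by (rule subsetD)
    then obtain k y where xky: "x = g [^] (k::int) \<otimes> y" and y: "y \<in> H" by blast
    show "\<exists>k'. H #> x = H #> g [^] k' \<and> (\<exists>n::nat. n > 0 \<and> g [^] (k' * int n) \<in> H)"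
      using rcos_torsion_mult_power[OF H g x(1) xky y] by blast
  qed
  have fibres: "x' \<otimes> inv x \<in> tors G \<inter> H"
    if x: "x \<in> tors G" and x': "x' \<in> tors G" and eq: "H #> x = H #> x'" for x x'
  proof
    have xc: "x \<in> carrier G" and x'c: "x' \<in> carrier G"
      using subsetD[OF tors_subset_carrier x] subsetD[OF tors_subset_carrier x'] by simp_all
    show "x' \<otimes> inv x \<in> tors G"
      using x x' subgroup_tors by (simp add: subgroup.m_closed subgroup.m_inv_closed)
    have "x' \<in> H #> x" using repr_independenceD[OF H x'c eq] .
    then show "x' \<otimes> inv x \<in> H" using subgroup.rcos_module_imp[OF H is_group xc] by blast
  qed
  show ?case
  proof (rule card_le_by_fibres(1)[OF _ finite_tors_H _ fibres])
    show "tors G \<inter> generate G (insert g S) \<subseteq> carrier G"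
      using tors_subset_carrier[of G] by blast
    show "finite ((\<lambda>x. H #> x) ` (tors G \<inter> generate G (insert g S)))"
      using finite_subset[OF cosets finite_rcosets_of_torsion_powers[OF H g]] .
  qed auto
qed

lemma finite_tors:
  assumes "comm_group G" "fin_gen G"
  shows "finite (tors G)"
proof -
  obtain S where S: "finite S" "S \<subseteq> carrier G" "generate G S = carrier G"
    using assms(2) unfolding fin_gen_def by blast
  moreover have "tors G \<inter> generate G S = tors G"
    using S(3) tors_subset_carrier[of G] by blast
  ultimately show ?thesis
    using comm_group.finite_tors_inter_generate[OF assms(1)] by metis
qed

lemma fin_gen_surj_hom_image:
  assumes "group G" "group H" "h \<in> hom G H" "h ` carrier G = carrier H" "fin_gen G"
  shows "fin_gen H"
proof -
  interpret group_hom G H h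
    using assms by (simp add: group_hom_def group_hom_axioms_def)
  obtain S where S: "finite S" "S \<subseteq> carrier G" "generate G S = carrier G"
    using assms(5) unfolding fin_gen_def by blast
  have "generate H (h ` S) = carrier H"
    using generate_img[OF S(2)] S(3) assms(4) by simp
  moreover have "h ` S \<subseteq> carrier H" using S(2) by auto
  ultimately show ?thesis
    unfolding fin_gen_def using S(1) by blast
qed

lemma free_map_rcos:
  assumes A: "comm_group A" and B: "comm_group B" and \<phi>: "\<phi> \<in> hom A B"
    and a: "a \<in> carrier A"
  shows "free_map A B \<phi> (tors A #>\<^bsub>A\<^esub> a) = tors B #>\<^bsub>B\<^esub> \<phi> a"
proof -
  interpret A: comm_group A by (rule A)
  interpret B: comm_group B by (rule B)
  have \<phi>a: "\<phi> a \<in> carrier B" using hom_in_carrier[OF \<phi> a] .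
  have "tors B #>\<^bsub>B\<^esub> \<phi> y = tors B #>\<^bsub>B\<^esub> \<phi> a" if y: "y \<in> tors A #>\<^bsub>A\<^esub> a" for y
  proof -
    obtain t where t: "t \<in> tors A" "y = t \<otimes>\<^bsub>A\<^esub> a"
      using y unfolding r_coset_def by auto
    have "\<phi> t \<in> tors B"
      using hom_tors[OF A.is_group B.is_group \<phi>] t(1) by blast
    moreover have "\<phi> y = \<phi> t \<otimes>\<^bsub>B\<^esub> \<phi> a"
      using t subsetD[OF tors_subset_carrier t(1)] a \<phi> by (simp add: hom_mult)
    ultimately have "\<phi> y \<in> tors B #>\<^bsub>B\<^esub> \<phi> a"
      using \<phi>a tors_subset_carrier[of B] by (simp add: B.rcosI)
    then show ?thesis
      using B.repr_independence[OF _ \<phi>a B.subgroup_tors] by simp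
  qed
  moreover have "a \<in> tors A #>\<^bsub>A\<^esub> a"
    using A.rcos_self[OF a A.subgroup_tors] .
  ultimately show ?thesis
    unfolding free_map_def by blast
qed

lemma image_free_map:
  assumes "comm_group A" "comm_group B" "\<phi> \<in> hom A B"
  shows "free_map A B \<phi> ` carrier (free_part A) = (\<lambda>a. tors B #>\<^bsub>B\<^esub> \<phi> a) ` carrier A"
  unfolding free_part_def carrier_FactGroup image_image
  using free_map_rcos[OF assms] by simp

lemma free_coker_projection:
  assumes A: "comm_group A" and B: "comm_group B" and \<phi>: "\<phi> \<in> hom A B"
  defines "Q \<equiv> coker (free_part A) (free_part B) (free_map A B \<phi>)"
  obtains \<pi> where "comm_group Q" "\<pi> \<in> hom B Q" "\<pi> ` carrier B = carrier Q"
    and "\<And>a. a \<in> carrier A \<Longrightarrow> \<pi> (\<phi> a) = \<one>\<^bsub>Q\<^esub>"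
    and "\<And>b. b \<in> carrier B \<Longrightarrow> \<pi> b = \<one>\<^bsub>Q\<^esub> \<Longrightarrow> \<exists>t\<in>tors B. \<exists>a\<in>carrier A. b = t \<otimes>\<^bsub>B\<^esub> \<phi> a"
proof -
  interpret A: comm_group A by (rule A)
  interpret B: comm_group B by (rule B)
  interpret \<phi>: group_hom A B \<phi>
    using \<phi> by (simp add: group_hom_def group_hom_axioms_def)
  let ?F = "free_part B" and ?q = "\<lambda>b. tors B #>\<^bsub>B\<^esub> b"
  have F: "comm_group ?F"
    unfolding free_part_def by (rule B.abelian_FactGroup[OF B.subgroup_tors])
  interpret F: comm_group ?F by (rule F)
  have q: "?q \<in> hom B ?F"
    unfolding free_part_def
    by (rule normal.r_coset_hom_Mod) (simp add: B.normal_iff_subgroup B.subgroup_tors)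
  interpret q: group_hom B ?F ?q
    using q by (simp add: group_hom_def group_hom_axioms_def)
  define N where "N = free_map A B \<phi> ` carrier (free_part A)"
  have N: "N = ?q ` \<phi> ` carrier A"
    unfolding N_def image_free_map[OF A B \<phi>] image_image ..
  have N_subgroup: "subgroup N ?F"
    unfolding N by (rule q.subgroup_img_is_subgroup[OF \<phi>.img_is_subgroup])
  have Q: "Q = ?F Mod N"
    unfolding Q_def coker_def N_def ..
  let ?p = "\<lambda>Y. N #>\<^bsub>?F\<^esub> Y"
  have p: "?p \<in> hom ?F Q"
    unfolding Q
    by (rule normal.r_coset_hom_Mod) (simp add: F.normal_iff_subgroup N_subgroup)
  show thesis
  proof
    show "comm_group Q"
      unfolding Q by (rule F.abelian_FactGroup[OF N_subgroup])
    show "?p \<circ> ?q \<in> hom B Q" using hom_compose[OF q p] .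
    show "(?p \<circ> ?q) ` carrier B = carrier Q"
      unfolding Q carrier_FactGroup free_part_def image_comp ..
  next
    fix a assume "a \<in> carrier A"
    then have "?q (\<phi> a) \<in> N" unfolding N by blast
    then show "(?p \<circ> ?q) (\<phi> a) = \<one>\<^bsub>Q\<^esub>"
      unfolding Q by (simp add: subgroup.rcos_const[OF N_subgroup F.is_group])
  next
    fix b assume b: "b \<in> carrier B" and "(?p \<circ> ?q) b = \<one>\<^bsub>Q\<^esub>"
    then have "N #>\<^bsub>?F\<^esub> ?q b = N" unfolding Q by simp
    moreover have "?q b \<in> N #>\<^bsub>?F\<^esub> ?q b"
      using F.rcos_self[OF q.hom_closed[OF b] N_subgroup] .
    ultimately obtain a where a: "a \<in> carrier A" "?q b = ?q (\<phi> a)"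
      unfolding N by auto
    have "b \<in> ?q b" using B.rcos_self[OF b B.subgroup_tors] .
    then have "b \<in> tors B #>\<^bsub>B\<^esub> \<phi> a" using a(2) by simp
    then show "\<exists>t\<in>tors B. \<exists>a\<in>carrier A. b = t \<otimes>\<^bsub>B\<^esub> \<phi> a"
      using a(1) unfolding r_coset_def by blast
  qed
qed

lemma card_tors_le_card_tors_kernel_mult:
  assumes G: "comm_group G" and H: "group H" and h: "h \<in> hom G H" and fin: "finite (tors H)"
  shows "card (tors G) \<le> card (tors G \<inter> kernel G H h) * card (tors H)"
proof (cases "finite (tors G)")
  case False
  then show ?thesis by simp
next
  case True
  interpret G: comm_group G by (rule G)
  interpret h: group_hom G H h
    using H h by (simp add: group_hom_def group_hom_axioms_def)
  have fibres: "x' \<otimes>\<^bsub>G\<^esub> inv\<^bsub>G\<^esub> x \<in> tors G \<inter> kernel G H h"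
    if x: "x \<in> tors G" and x': "x' \<in> tors G" and eq: "h x = h x'" for x x'
  proof
    have xc: "x \<in> carrier G" and x'c: "x' \<in> carrier G"
      using subsetD[OF tors_subset_carrier x] subsetD[OF tors_subset_carrier x'] by simp_all
    show "x' \<otimes>\<^bsub>G\<^esub> inv\<^bsub>G\<^esub> x \<in> tors G"
      using x x' G.subgroup_tors by (simp add: subgroup.m_closed subgroup.m_inv_closed)
    have "h (x' \<otimes>\<^bsub>G\<^esub> inv\<^bsub>G\<^esub> x) = h x' \<otimes>\<^bsub>H\<^esub> inv\<^bsub>H\<^esub> h x'"
      using xc x'c eq by simp
    then show "x' \<otimes>\<^bsub>G\<^esub> inv\<^bsub>G\<^esub> x \<in> kernel G H h"
      using xc x'c unfolding kernel_def by simp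
  qed
  have "card (tors G) \<le> card (tors G \<inter> kernel G H h) * card (h ` tors G)"
    using G.card_le_by_fibres(2)[OF tors_subset_carrier _ _ fibres] True by simp
  also have "\<dots> \<le> card (tors G \<inter> kernel G H h) * card (tors H)"
    using card_mono[OF fin hom_tors[OF G.is_group H h]] by simp
  finally show ?thesis .
qed

lemma card_tors_inter_image_le:
  assumes A: "comm_group A" and B: "comm_group B" and C: "comm_group C" and "fin_gen B"
    and \<phi>: "\<phi> \<in> hom A B" and \<psi>: "\<psi> \<in> hom B C"
    and exact: "kernel B C \<psi> = \<phi> ` carrier A"
  shows "card (tors C \<inter> \<psi> ` carrier B)
           \<le> card (tors B) * card (tors (coker (free_part A) (free_part B) (free_map A B \<phi>)))"
proof -
  define Q where "Q = coker (free_part A) (free_part B) (free_map A B \<phi>)"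
  obtain \<pi> where Q: "comm_group Q" and \<pi>: "\<pi> \<in> hom B Q" "\<pi> ` carrier B = carrier Q"
    and \<pi>_\<phi>: "\<And>a. a \<in> carrier A \<Longrightarrow> \<pi> (\<phi> a) = \<one>\<^bsub>Q\<^esub>"
    and \<pi>_kernel: "\<And>b. b \<in> carrier B \<Longrightarrow> \<pi> b = \<one>\<^bsub>Q\<^esub> \<Longrightarrow> \<exists>t\<in>tors B. \<exists>a\<in>carrier A. b = t \<otimes>\<^bsub>B\<^esub> \<phi> a"
    by (rule free_coker_projection[OF A B \<phi>, folded Q_def]) blast
  interpret B: comm_group B by (rule B)
  interpret C: comm_group C by (rule C)
  interpret Q: comm_group Q by (rule Q)
  interpret \<psi>: group_hom B C \<psi>
    using \<psi> by (simp add: group_hom_def group_hom_axioms_def)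
  interpret \<pi>: group_hom B Q \<pi>
    using \<pi> by (simp add: group_hom_def group_hom_axioms_def)
  have fin_B: "finite (tors B)" using finite_tors[OF B \<open>fin_gen B\<close>] .
  have fin_Q: "finite (tors Q)"
    using finite_tors[OF Q fin_gen_surj_hom_image[OF B.is_group Q.is_group \<pi> \<open>fin_gen B\<close>]] .
  define K where "K = tors C \<inter> \<psi> ` carrier B"
  define lift where "lift = inv_into (carrier B) \<psi>"
  have lift: "lift c \<in> carrier B" "\<psi> (lift c) = c" if "c \<in> K" for c
    using that unfolding K_def lift_def by (auto intro: inv_into_into f_inv_into_f)
  have "\<pi> (lift c) \<in> tors Q" if c: "c \<in> K" for c
  proof -
    obtain n :: nat where n: "n > 0" "c [^]\<^bsub>C\<^esub> n = \<one>\<^bsub>C\<^esub>"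
      using c unfolding K_def tors_def by blast
    then have "lift c [^]\<^bsub>B\<^esub> n \<in> kernel B C \<psi>"
      using lift[OF c] unfolding kernel_def by (simp add: \<psi>.hom_nat_pow)
    then obtain a where "a \<in> carrier A" "lift c [^]\<^bsub>B\<^esub> n = \<phi> a"
      unfolding exact by blast
    then have "\<pi> (lift c) [^]\<^bsub>Q\<^esub> n = \<one>\<^bsub>Q\<^esub>"
      using lift[OF c] \<pi>_\<phi> by (simp flip: \<pi>.hom_nat_pow)
    then show ?thesis
      unfolding tors_def using n(1) lift[OF c] by auto
  qed
  then have image: "(\<pi> \<circ> lift) ` K \<subseteq> tors Q" by auto
  have fibres: "c' \<otimes>\<^bsub>C\<^esub> inv\<^bsub>C\<^esub> c \<in> \<psi> ` tors B"
    if c: "c \<in> K" and c': "c' \<in> K" and eq: "(\<pi> \<circ> lift) c = (\<pi> \<circ> lift) c'" for c c'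
  proof -
    let ?d = "lift c' \<otimes>\<^bsub>B\<^esub> inv\<^bsub>B\<^esub> lift c"
    have "?d \<in> carrier B" using lift[OF c] lift[OF c'] by simp
    moreover have "\<pi> ?d = \<one>\<^bsub>Q\<^esub>"
      using lift[OF c] lift[OF c'] eq by simp
    ultimately obtain t a where t: "t \<in> tors B" and a: "a \<in> carrier A" and d: "?d = t \<otimes>\<^bsub>B\<^esub> \<phi> a"
      using \<pi>_kernel by metis
    have "\<phi> a \<in> kernel B C \<psi>" unfolding exact using a by blast
    then have "\<psi> ?d = \<psi> t"
      using d subsetD[OF tors_subset_carrier t] unfolding kernel_def by simp
    moreover have "\<psi> ?d = c' \<otimes>\<^bsub>C\<^esub> inv\<^bsub>C\<^esub> c"
      using lift[OF c] lift[OF c'] by simp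
    ultimately show ?thesis using t by auto
  qed
  have "K \<subseteq> carrier C"
    unfolding K_def using tors_subset_carrier[of C] by blast
  then have "card K \<le> card (\<psi> ` tors B) * card ((\<pi> \<circ> lift) ` K)"
    using C.card_le_by_fibres(2)[OF _ finite_imageI[OF fin_B] finite_subset[OF image fin_Q] fibres]
    by blast
  also have "\<dots> \<le> card (tors B) * card (tors Q)"
    using card_image_le[OF fin_B] card_mono[OF fin_Q image] by (rule mult_le_mono)
  finally show ?thesis unfolding K_def Q_def .
qed

theorem lemma4p1:
  fixes A :: "('a, 'ma) monoid_scheme" and B :: "('b, 'mb) monoid_scheme"
    and C :: "('c, 'mc) monoid_scheme" and D :: "('d, 'md) monoid_scheme"
    and \<phi> :: "'a \<Rightarrow> 'b" and \<psi> :: "'b \<Rightarrow> 'c" and \<chi> :: "'c \<Rightarrow> 'd"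
  assumes "comm_group A" "comm_group B" "comm_group C" "comm_group D"
    and "fin_gen A" "fin_gen B" "fin_gen C" "fin_gen D"
    and "\<phi> \<in> hom A B" "\<psi> \<in> hom B C" "\<chi> \<in> hom C D"
    and "kernel B C \<psi> = \<phi> ` carrier A"
    and "kernel C D \<chi> = \<psi> ` carrier B"
  shows "card (tors C)
           \<le> card (tors (coker (free_part A) (free_part B) (free_map A B \<phi>))) * card (tors B) * card (tors D)"
proof -
  interpret D: comm_group D by fact
  have "card (tors C) \<le> card (tors C \<inter> \<psi> ` carrier B) * card (tors D)"
    using card_tors_le_card_tors_kernel_mult[OF \<open>comm_group C\<close> D.is_group
        \<open>\<chi> \<in> hom C D\<close> finite_tors[OF \<open>comm_group D\<close> \<open>fin_gen D\<close>]]
    unfolding \<open>kernel C D \<chi> = \<psi> ` carrier B\<close> .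
  also have "\<dots> \<le> card (tors B) * card (tors (coker (free_part A) (free_part B) (free_map A B \<phi>))) * card (tors D)"
    using card_tors_inter_image_le[OF assms(1-3,6,9,10,12)] by (rule mult_le_mono1)
  finally show ?thesis by (simp add: ac_simps)
qed

end
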